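(* Let $(X,d)$ be a compact metric space with at least two points and $f_{1,\infty}$ a finitely generated commutative sequence of continuous surjective self-maps of $X$. If $(X,f_{1,\infty})$ is weakly mixing, then it is thickly sensitive.
   Context: Finitely generated: there is a finite set $F$ of continuous self-maps of $X$ with $f_i\in F$ for all $i$. Commutative: $f_i\circ f_j=f_j\circ f_i$ for all $i,j$. Write $f_1^n=f_n\circ\cdots\circ f_1$. Weakly mixing: for all non-empty open $U_1,U_2,V_1,V_2$ there is $n$ with $f_1^n(U_i)\cap V_i\ne\emptyset$, $i=1,2$. For open $U$ and $\delta>0$, $N_{f_{1,\infty}}(U,\delta)=\{n\in\mathbb{N}:\exists x,y\in U,\ d(f_1^n(x),f_1^n(y))>\delta\}$. A set $T\subseteq\mathbb{N}$ is thick if for every $p\in\mathbb{N}$ there is $n$ with $\{n,n+1,\dots,n+p\}\subseteq T$. Thickly sensitive: there is $\delta>0$ such that $N_{f_{1,\infty}}(U,\delta)$ is thick for every non-empty open $U\subseteq X$. *)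

theory Defs
  imports "HOL-Analysis.Analysis"
begin

text \<open>The sequence is indexed from 1: f 1, f 2, ...; the value f 0 is irrelevant.
  seq_iter f n = f n o ... o f 1, with seq_iter f 0 = id.\<close>
fun seq_iter :: "(nat \<Rightarrow> 'a \<Rightarrow> 'a) \<Rightarrow> nat \<Rightarrow> 'a \<Rightarrow> 'a" where
  "seq_iter f 0 = id"
| "seq_iter f (Suc n) = f (Suc n) \<circ> seq_iter f n"

definition finitely_generated :: "'a::topological_space set \<Rightarrow> (nat \<Rightarrow> 'a \<Rightarrow> 'a) \<Rightarrow> bool" where
  "finitely_generated X f \<longleftrightarrow>
     (\<exists>F. finite F \<and> (\<forall>g\<in>F. continuous_on X g \<and> g ` X \<subseteq> X) \<and>
          (\<forall>i\<ge>1. \<exists>g\<in>F. \<forall>x\<in>X. f i x = g x))"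

definition commutative_seq :: "'a::topological_space set \<Rightarrow> (nat \<Rightarrow> 'a \<Rightarrow> 'a) \<Rightarrow> bool" where
  "commutative_seq X f \<longleftrightarrow> (\<forall>i\<ge>1. \<forall>j\<ge>1. \<forall>x\<in>X. f i (f j x) = f j (f i x))"

definition weakly_mixing_seq :: "'a::topological_space set \<Rightarrow> (nat \<Rightarrow> 'a \<Rightarrow> 'a) \<Rightarrow> bool" where
  "weakly_mixing_seq X f \<longleftrightarrow>
     (\<forall>U1 U2 V1 V2. openin (top_of_set X) U1 \<and> U1 \<noteq> {} \<and> openin (top_of_set X) U2 \<and> U2 \<noteq> {} \<and>
        openin (top_of_set X) V1 \<and> V1 \<noteq> {} \<and> openin (top_of_set X) V2 \<and> V2 \<noteq> {} \<longrightarrow>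
        (\<exists>n\<ge>1. seq_iter f n ` U1 \<inter> V1 \<noteq> {} \<and> seq_iter f n ` U2 \<inter> V2 \<noteq> {}))"

definition sens_times :: "(nat \<Rightarrow> 'a::metric_space \<Rightarrow> 'a) \<Rightarrow> 'a set \<Rightarrow> real \<Rightarrow> nat set" where
  "sens_times f U \<delta> = {n. n \<ge> 1 \<and> (\<exists>x\<in>U. \<exists>y\<in>U. dist (seq_iter f n x) (seq_iter f n y) > \<delta>)}"

definition thick :: "nat set \<Rightarrow> bool" where
  "thick T \<longleftrightarrow> (\<forall>p. \<exists>n. {n..n+p} \<subseteq> T)"

definition thickly_sensitive :: "'a::metric_space set \<Rightarrow> (nat \<Rightarrow> 'a \<Rightarrow> 'a) \<Rightarrow> bool" where
  "thickly_sensitive X f \<longleftrightarrow>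
     (\<exists>\<delta>>0. \<forall>U. openin (top_of_set X) U \<and> U \<noteq> {} \<longrightarrow> thick (sens_times f U \<delta>))"

end

theory Submission
  imports Defs
begin

text \<open>Weak mixing of a commutative sequence upgrades to hitting any finite family of pairs of
  non-empty open sets at a single time n: two pairs are merged into one by pulling back along a
  time m that serves both, and commutativity moves the pull-back past the later time.
  Given U and p, the blocks f(n+k) o ... o f(n+1) with k \<le> p are words of length at most p in
  the finitely many generators, so their preimages of two far-apart open sets V1, V2 form a
  finite family.\<close>

lemma seq_iter_add: "seq_iter f (n + k) = seq_iter (\<lambda>i. f (n + i)) k \<circ> seq_iter f n"
  by (induction k) auto

lemma seq_iter_in:
  assumes "\<And>i. i \<ge> 1 \<Longrightarrow> f i ` X \<subseteq> X" and "x \<in> X"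
  shows "seq_iter f n x \<in> X"
  using assms(2) by (induction n arbitrary: x) (use assms(1) in auto)

lemma continuous_on_seq_iter:
  assumes "\<And>i. i \<ge> 1 \<Longrightarrow> f i ` X \<subseteq> X" and "\<And>i. i \<ge> 1 \<Longrightarrow> continuous_on X (f i)"
  shows "continuous_on X (seq_iter f n)"
proof (induction n)
  case 0
  then show ?case by (simp add: continuous_on_id)
next
  case (Suc n)
  have "continuous_on X (f (Suc n))" using assms(2) by simp
  moreover have "seq_iter f n ` X \<subseteq> X" using seq_iter_in[of f X, OF assms(1)] by blast
  ultimately have "continuous_on (seq_iter f n ` X) (f (Suc n))" by (rule continuous_on_subset)
  with Suc have "continuous_on X (f (Suc n) \<circ> seq_iter f n)" by (rule continuous_on_compose)
  then show ?case by simp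
qed

lemma image_seq_iter:
  assumes "\<And>i. i \<ge> 1 \<Longrightarrow> f i ` X = X"
  shows "seq_iter f n ` X = X"
proof (induction n)
  case (Suc n)
  have "seq_iter f (Suc n) ` X = f (Suc n) ` seq_iter f n ` X" by (simp add: image_comp)
  with Suc assms[of "Suc n"] show ?case by simp
qed simp

lemma seq_iter_commute:
  assumes maps: "\<And>i. i \<ge> 1 \<Longrightarrow> f i ` X \<subseteq> X" and comm: "commutative_seq X f" and "x \<in> X"
  shows "seq_iter f m (seq_iter f n x) = seq_iter f n (seq_iter f m x)"
proof -
  have single: "f i (seq_iter f n y) = seq_iter f n (f i y)" if "i \<ge> 1" "y \<in> X" for i y
    using that(2)
  proof (induction n arbitrary: y)
    case (Suc n)
    have "f i (f (Suc n) (seq_iter f n y)) = f (Suc n) (f i (seq_iter f n y))"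
      using comm seq_iter_in[of f X, OF maps Suc.prems] \<open>i \<ge> 1\<close>
      unfolding commutative_seq_def by (metis le_add1 plus_1_eq_Suc)
    with Suc show ?case by simp
  qed simp
  show ?thesis
    using \<open>x \<in> X\<close>
  proof (induction m arbitrary: x)
    case (Suc m)
    have "seq_iter f m x \<in> X" using seq_iter_in[of f X, OF maps Suc.prems] .
    then have "f (Suc m) (seq_iter f n (seq_iter f m x)) = seq_iter f n (f (Suc m) (seq_iter f m x))"
      using single by simp
    with Suc show ?case by simp
  qed simp
qed

definition nonempty_openin :: "'a::topological_space set \<Rightarrow> 'a set \<Rightarrow> bool" where
  "nonempty_openin X U \<longleftrightarrow> openin (top_of_set X) U \<and> U \<noteq> {}"

lemma nonempty_openin_preimage_seq_iter:
  assumes "\<And>i. i \<ge> 1 \<Longrightarrow> f i ` X = X" and "\<And>i. i \<ge> 1 \<Longrightarrow> continuous_on X (f i)"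
    and "nonempty_openin X V"
  shows "nonempty_openin X (X \<inter> seq_iter f k -` V)"
proof -
  have maps: "\<And>i. i \<ge> 1 \<Longrightarrow> f i ` X \<subseteq> X" using assms(1) by simp
  have "seq_iter f k \<in> X \<rightarrow> X" using seq_iter_in[of f X, OF maps] by blast
  then have "openin (top_of_set X) (X \<inter> seq_iter f k -` V)"
    using assms(3) continuous_openin_preimage continuous_on_seq_iter[of f X, OF maps assms(2)]
    unfolding nonempty_openin_def by blast
  moreover have "V \<subseteq> seq_iter f k ` X" "V \<noteq> {}"
    using assms(3) image_seq_iter[of f X, OF assms(1)]
    by (auto simp: nonempty_openin_def dest: openin_imp_subset)
  then have "X \<inter> seq_iter f k -` V \<noteq> {}" by blast
  ultimately show ?thesis unfolding nonempty_openin_def by blast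
qed

lemma nonempty_openin_Int_preimage:
  assumes "continuous_on X g" and "g ` X \<subseteq> X"
    and "nonempty_openin X U" and "nonempty_openin X V" and "g ` U \<inter> V \<noteq> {}"
  shows "nonempty_openin X (U \<inter> (X \<inter> g -` V))"
proof -
  have "openin (top_of_set X) (X \<inter> g -` V)"
    using assms(1,2,4) continuous_openin_preimage[of X g X V]
    unfolding nonempty_openin_def by blast
  then have "openin (top_of_set X) (U \<inter> (X \<inter> g -` V))"
    using assms(3) unfolding nonempty_openin_def by blast
  moreover have "U \<subseteq> X" using assms(3) openin_imp_subset by (auto simp: nonempty_openin_def)
  ultimately show ?thesis using assms(5) unfolding nonempty_openin_def by blast
qed

lemma weakly_mixing_seqD:
  assumes "weakly_mixing_seq X f"
    and "nonempty_openin X U\<^sub>1" "nonempty_openin X U\<^sub>2" "nonempty_openin X V\<^sub>1" "nonempty_openin X V\<^sub>2"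
  obtains n where "n \<ge> 1" "seq_iter f n ` U\<^sub>1 \<inter> V\<^sub>1 \<noteq> {}" "seq_iter f n ` U\<^sub>2 \<inter> V\<^sub>2 \<noteq> {}"
  using assms(1)[unfolded weakly_mixing_seq_def, rule_format, of U\<^sub>1 U\<^sub>2 V\<^sub>1 V\<^sub>2] assms(2-5)
  unfolding nonempty_openin_def by blast

text \<open>The extra pair (U0, V0) is carried along so that the induction step can merge it with a new pair.\<close>
lemma weakly_mixing_seq_finite_family_aux:
  assumes maps: "\<And>i. i \<ge> 1 \<Longrightarrow> f i ` X \<subseteq> X"
    and cont: "\<And>i. i \<ge> 1 \<Longrightarrow> continuous_on X (f i)"
    and comm: "commutative_seq X f" and wm: "weakly_mixing_seq X f"
    and "finite S"
  shows "\<forall>(U, V)\<in>S. nonempty_openin X U \<and> nonempty_openin X V \<Longrightarrow>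
    nonempty_openin X U\<^sub>0 \<Longrightarrow> nonempty_openin X V\<^sub>0 \<Longrightarrow>
    \<exists>n\<ge>1. seq_iter f n ` U\<^sub>0 \<inter> V\<^sub>0 \<noteq> {} \<and> (\<forall>(U, V)\<in>S. seq_iter f n ` U \<inter> V \<noteq> {})"
  using assms(5)
proof (induction S arbitrary: U\<^sub>0 V\<^sub>0 rule: finite_induct)
  case empty
  obtain n where "n \<ge> 1" "seq_iter f n ` U\<^sub>0 \<inter> V\<^sub>0 \<noteq> {}"
    using weakly_mixing_seqD[OF wm empty.prems(2,2,3,3)] by metis
  then show ?case by blast
next
  case (insert P S)
  note S_opens = insert.prems(1) and U\<^sub>0 = insert.prems(2) and V\<^sub>0 = insert.prems(3)
  obtain U\<^sub>1 V\<^sub>1 where P: "P = (U\<^sub>1, V\<^sub>1)" by (cases P)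
  with S_opens have U\<^sub>1: "nonempty_openin X U\<^sub>1" and V\<^sub>1: "nonempty_openin X V\<^sub>1" by auto
  obtain m where m: "seq_iter f m ` U\<^sub>0 \<inter> U\<^sub>1 \<noteq> {}" "seq_iter f m ` V\<^sub>0 \<inter> V\<^sub>1 \<noteq> {}"
    using weakly_mixing_seqD[OF wm U\<^sub>0 V\<^sub>0 U\<^sub>1 V\<^sub>1] by metis
  define U' where "U' = U\<^sub>0 \<inter> (X \<inter> seq_iter f m -` U\<^sub>1)"
  define V' where "V' = V\<^sub>0 \<inter> (X \<inter> seq_iter f m -` V\<^sub>1)"
  have cont_m: "continuous_on X (seq_iter f m)" and maps_m: "seq_iter f m ` X \<subseteq> X"
    using continuous_on_seq_iter[of f X, OF maps cont] seq_iter_in[of f X, OF maps] by auto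
  have "nonempty_openin X U'" "nonempty_openin X V'"
    unfolding U'_def V'_def
    using nonempty_openin_Int_preimage[OF cont_m maps_m U\<^sub>0 U\<^sub>1 m(1)]
      nonempty_openin_Int_preimage[OF cont_m maps_m V\<^sub>0 V\<^sub>1 m(2)] by auto
  with insert.IH S_opens obtain n where "n \<ge> 1"
    and "seq_iter f n ` U' \<inter> V' \<noteq> {}" and rest: "\<forall>(U, V)\<in>S. seq_iter f n ` U \<inter> V \<noteq> {}"
    by (metis insert_iff)
  then obtain x where x: "x \<in> U'" "seq_iter f n x \<in> V'" by blast
  then have "seq_iter f n (seq_iter f m x) = seq_iter f m (seq_iter f n x)"
    using seq_iter_commute[of f X, OF maps comm] by (simp add: U'_def)
  with x have "seq_iter f n ` U\<^sub>0 \<inter> V\<^sub>0 \<noteq> {}" "seq_iter f n ` U\<^sub>1 \<inter> V\<^sub>1 \<noteq> {}"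
    unfolding U'_def V'_def by force+
  with \<open>n \<ge> 1\<close> rest P show ?case by auto
qed

lemma weakly_mixing_seq_finite_family:
  assumes "\<And>i. i \<ge> 1 \<Longrightarrow> f i ` X \<subseteq> X" and "\<And>i. i \<ge> 1 \<Longrightarrow> continuous_on X (f i)"
    and "commutative_seq X f" and "weakly_mixing_seq X f"
    and "finite S" and "\<forall>(U, V)\<in>S. nonempty_openin X U \<and> nonempty_openin X V"
  shows "\<exists>n\<ge>1. \<forall>(U, V)\<in>S. seq_iter f n ` U \<inter> V \<noteq> {}"
proof (cases "S = {}")
  case True
  then show ?thesis by (intro exI[of _ 1]) simp
next
  case False
  then obtain U\<^sub>0 V\<^sub>0 where "(U\<^sub>0, V\<^sub>0) \<in> S" by auto
  with assms(6) have "nonempty_openin X U\<^sub>0" "nonempty_openin X V\<^sub>0" by auto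
  then show ?thesis
    using weakly_mixing_seq_finite_family_aux[of f X, OF assms] by blast
qed

lemma seq_iter_eq_word:
  assumes "\<And>i. i \<ge> 1 \<Longrightarrow> f i ` X \<subseteq> X" and "\<And>i. i \<ge> 1 \<Longrightarrow> \<exists>g\<in>F. \<forall>x\<in>X. f i x = g x"
  shows "\<exists>gs. set gs \<subseteq> F \<and> length gs = k \<and> (\<forall>x\<in>X. seq_iter f k x = foldr (\<circ>) gs id x)"
proof (induction k)
  case 0
  then show ?case by simp
next
  case (Suc k)
  then obtain gs where gs: "set gs \<subseteq> F" "length gs = k" "\<forall>x\<in>X. seq_iter f k x = foldr (\<circ>) gs id x"
    by blast
  obtain g where g: "g \<in> F" "\<forall>x\<in>X. f (Suc k) x = g x" using assms(2)[of "Suc k"] by auto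
  have "seq_iter f (Suc k) x = foldr (\<circ>) (g # gs) id x" if "x \<in> X" for x
  proof -
    have "seq_iter f k x \<in> X" using seq_iter_in[of f X, OF assms(1) that] .
    then show ?thesis using gs(3) g(2) that by simp
  qed
  moreover have "set (g # gs) \<subseteq> F" "length (g # gs) = Suc k" using gs g by auto
  ultimately show ?case by blast
qed

lemma finite_block_preimages:
  assumes "finitely_generated X f" and "\<And>i. i \<ge> 1 \<Longrightarrow> f i ` X \<subseteq> X"
  shows "finite {X \<inter> seq_iter (\<lambda>i. f (n + i)) k -` V | n k. k \<le> p}"
proof -
  obtain F where "finite F" and F: "\<forall>i\<ge>1. \<exists>g\<in>F. \<forall>x\<in>X. f i x = g x"
    using assms(1) unfolding finitely_generated_def by blast
  let ?W = "{gs. set gs \<subseteq> F \<and> length gs \<le> p}"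
  have "{X \<inter> seq_iter (\<lambda>i. f (n + i)) k -` V | n k. k \<le> p}
      \<subseteq> (\<lambda>gs. X \<inter> foldr (\<circ>) gs id -` V) ` ?W"
  proof clarify
    fix n k assume "k \<le> p"
    obtain gs where "set gs \<subseteq> F" "length gs = k"
      and "\<forall>x\<in>X. seq_iter (\<lambda>i. f (n + i)) k x = foldr (\<circ>) gs id x"
      using seq_iter_eq_word[of "\<lambda>i. f (n + i)" X F k] assms(2) F by auto
    with \<open>k \<le> p\<close> show "X \<inter> seq_iter (\<lambda>i. f (n + i)) k -` V \<in> (\<lambda>gs. X \<inter> foldr (\<circ>) gs id -` V) ` ?W"
      by (intro image_eqI[of _ _ gs]) auto
  qed
  moreover have "finite ?W" using finite_lists_length_le[OF \<open>finite F\<close>] .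
  ultimately show ?thesis by (rule finite_subset[OF _ finite_imageI])
qed

lemma thick_sens_times:
  assumes surj: "\<And>i. i \<ge> 1 \<Longrightarrow> f i ` X = X"
    and cont: "\<And>i. i \<ge> 1 \<Longrightarrow> continuous_on X (f i)"
    and fg: "finitely_generated X f" and comm: "commutative_seq X f"
    and wm: "weakly_mixing_seq X f"
    and U: "nonempty_openin X U"
    and V: "nonempty_openin X V\<^sub>1" "nonempty_openin X V\<^sub>2"
    and far: "\<And>x y. x \<in> V\<^sub>1 \<Longrightarrow> y \<in> V\<^sub>2 \<Longrightarrow> dist x y > \<delta>"
  shows "thick (sens_times f U \<delta>)"
  unfolding thick_def
proof
  fix p
  have maps: "\<And>i. i \<ge> 1 \<Longrightarrow> f i ` X \<subseteq> X" using surj by simp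
  define block where "block n k = seq_iter (\<lambda>i. f (n + i)) k" for n k
  define P where "P V = {X \<inter> block n k -` V | n k. k \<le> p}" for V
  define S where "S = Pair U ` (P V\<^sub>1 \<union> P V\<^sub>2)"
  have block_opens: "nonempty_openin X (X \<inter> block n k -` V)" if "nonempty_openin X V" for n k V
    unfolding block_def
    using nonempty_openin_preimage_seq_iter[of "\<lambda>i. f (n + i)" X V k] surj cont that by simp
  have "finite S"
    unfolding S_def P_def block_def using finite_block_preimages[OF fg] maps by simp
  moreover have "\<forall>(A, B)\<in>S. nonempty_openin X A \<and> nonempty_openin X B"
    unfolding S_def P_def using U V block_opens by auto
  ultimately have "\<exists>n\<ge>1. \<forall>(A, B)\<in>S. seq_iter f n ` A \<inter> B \<noteq> {}"
    by (intro weakly_mixing_seq_finite_family[OF _ _ comm wm]) (simp_all add: maps cont)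
  then obtain n where "n \<ge> 1" and n: "\<forall>(A, B)\<in>S. seq_iter f n ` A \<inter> B \<noteq> {}"
    by blast
  have "j \<in> sens_times f U \<delta>" if "j \<in> {n..n + p}" for j
  proof -
    define k where "k = j - n"
    have "k \<le> p" "j = n + k" using that by (auto simp: k_def)
    have "X \<inter> block n k -` V \<in> P V" for V
      unfolding P_def using \<open>k \<le> p\<close> by blast
    then have "(U, X \<inter> block n k -` V\<^sub>1) \<in> S" "(U, X \<inter> block n k -` V\<^sub>2) \<in> S"
      unfolding S_def by simp_all
    then have "seq_iter f n ` U \<inter> (X \<inter> block n k -` V\<^sub>1) \<noteq> {}"
      and "seq_iter f n ` U \<inter> (X \<inter> block n k -` V\<^sub>2) \<noteq> {}"
      using n by auto
    then obtain x y where "x \<in> U" "block n k (seq_iter f n x) \<in> V\<^sub>1"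
      and "y \<in> U" "block n k (seq_iter f n y) \<in> V\<^sub>2"
      by blast
    moreover have "seq_iter f j = block n k \<circ> seq_iter f n"
      unfolding block_def \<open>j = n + k\<close> by (rule seq_iter_add)
    ultimately have "dist (seq_iter f j x) (seq_iter f j y) > \<delta>" by (simp add: far)
    with \<open>x \<in> U\<close> \<open>y \<in> U\<close> \<open>n \<ge> 1\<close> \<open>j = n + k\<close> show ?thesis
      unfolding sens_times_def by auto
  qed
  then have "{n..n + p} \<subseteq> sens_times f U \<delta>" by blast
  then show "\<exists>n. {n..n + p} \<subseteq> sens_times f U \<delta>" by blast
qed

theorem mainTheorem14:
  fixes X :: "'a::metric_space set" and f :: "nat \<Rightarrow> 'a \<Rightarrow> 'a"
  assumes "compact X"
    and "\<exists>a\<in>X. \<exists>b\<in>X. a \<noteq> b"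
    and "\<And>i. i \<ge> 1 \<Longrightarrow> continuous_on X (f i)"
    and "\<And>i. i \<ge> 1 \<Longrightarrow> f i ` X = X"
    and "finitely_generated X f"
    and "commutative_seq X f"
    and "weakly_mixing_seq X f"
  shows "thickly_sensitive X f"
proof -
  obtain a b where ab: "a \<in> X" "b \<in> X" "a \<noteq> b" using assms(2) by blast
  define e where "e = dist a b / 3"
  have "e > 0" using ab by (simp add: e_def)
  have balls: "nonempty_openin X (X \<inter> ball a e)" "nonempty_openin X (X \<inter> ball b e)"
    using ab \<open>e > 0\<close> by (auto simp: nonempty_openin_def openin_open_Int)
  have far: "dist x y > e" if "x \<in> X \<inter> ball a e" "y \<in> X \<inter> ball b e" for x y
  proof -
    have "dist a b \<le> dist a x + dist x b" "dist x b \<le> dist x y + dist y b"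
      by (rule dist_triangle)+
    moreover have "dist a x < e" "dist y b < e" using that by (auto simp: dist_commute)
    ultimately show ?thesis unfolding e_def by linarith
  qed
  show ?thesis
    unfolding thickly_sensitive_def
    using thick_sens_times[OF _ _ assms(5-7) _ balls far] assms(3,4) \<open>e > 0\<close>
    by (auto simp: nonempty_openin_def)
qed

end
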